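(* For every $(x,a)\in H\times\mathcal{A}$, the robust Q-function satisfies \[ Q^{\delta,\mathscr{P}}_{\pi}(x,a)=\inf_{\lambda\ge0}\Big[\lambda\delta+\sum_{y\in\mathcal{X}}\max_{l\in\mathcal{X}}\Big(-\lambda|l-y|+c(x,a,l)+\sum_{a'\in\mathcal{A}}Q^{\delta,\mathscr{P}}_{\pi}(l,a')\pi(a'|l)\Big)P_{x,a}(y)\Big], \] where $c(x,a,l)=1$ if $l\in U$ and $c(x,a,l)=0$ otherwise.
   Context: Consider a Markov decision process with a finite state set $\mathcal{X}$, viewed as a subset of $\mathbb{R}$ (so $|y-z|$ is the distance between states), and a finite action set $\mathcal{A}$. The state set is partitioned into a goal set $E$, a forbidden (unsafe) set $U$, and $H:=\mathcal{X}\setminus(E\cup U)$; $E$ and $U$ are terminal (the process stops there). For each $(x,a)\in H\times\mathcal{A}$ a nominal transition probability $\mathcal{P}_{x,a}=\{P_{x,a}(y)\}_{y\in\mathcal{X}}$ on $\mathcal{X}$ is given, and $\mathscr{P}=\{\mathcal{P}_{x,a}\}_{(x,a)\in H\times\mathcal{A}}$; transition probabilities are time-invariant. The sample space is $\Omega=(\mathcal{X}\times\mathcal{A})^{\infty}$ with coordinate processes $X_t,A_t$. A stationary policy is $\pi:\mathcal{X}\to\mathscr{M}(\mathcal{A})$, written $\pi(a|x)$. For any collection $\tilde{\mathscr{P}}=\{\tilde{\mathcal{P}}_{x,a}\}_{(x,a)\in H\times\mathcal{A}}$ of transition probabilities, $\mathbb{E}^{\tilde{\mathscr{P}}}_{\pi}$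 denotes expectation for the process with $X_{t+1}\sim\tilde{\mathcal{P}}_{X_t,A_t}$ and $A_t\sim\pi(\cdot|X_t)$ (except when $A_0$ is conditioned on). For $S\subseteq\mathcal{X}$, $\tau_S$ is the first hitting time of $S$, and $\tau=\tau_{E\cup U}$. The 1-Wasserstein distance between probability measures $\mu,\nu$ on $\mathcal{X}$ is $W(\mu,\nu)=\min\{\sum_{(y,z)}\Gamma(y,z)|y-z| : \Gamma\in\mathscr{M}(\mathcal{X}\times\mathcal{X}),\ \sum_z\Gamma(y,z)=\mu(y),\ \sum_y\Gamma(y,z)=\nu(z)\}$. For $\delta\ge0$, $\mathcal{D}^{\delta}_{x,a}=\{\tilde{\mathcal{P}}_{x,a}\in\mathscr{M}(\mathcal{X}): W(\tilde{\mathcal{P}}_{x,a},\mathcal{P}_{x,a})\le\delta\}$ and $\mathscr{D}^{\delta}=\prod_{(x,a)\in H\times\mathcal{A}}\mathcal{D}^{\delta}_{x,a}$. The robust Q-function is $Q^{\delta,\mathscr{P}}_{\pi}(x,a)=\sup_{\tilde{\mathscr{P}}\in\mathscr{D}^{\delta}}\mathbb{E}^{\tilde{\mathscr{P}}}_{\pi}\big[\sum_{t=0}^{\tau-1}c_{t+1}\mid X_0=x,A_0=a\big]$, where $c_{t+1}=1$ if $X_{t+1}\in U$ and $0$ otherwise; by the same formula (empty sum, since $\tau=0$), $Q^{\delta,\mathscr{P}}_{\pi}(l,a')=0$ for terminal states $l\in E\cup U$. *)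

theory Defs
  imports Complex_Main
begin

definition is_dist :: "'s set \<Rightarrow> ('s \<Rightarrow> real) \<Rightarrow> bool" where
  "is_dist S p \<longleftrightarrow> (\<forall>y. 0 \<le> p y) \<and> (\<forall>y. y \<notin> S \<longrightarrow> p y = 0) \<and> sum p S = 1"

definition couplings :: "real set \<Rightarrow> (real \<Rightarrow> real) \<Rightarrow> (real \<Rightarrow> real) \<Rightarrow> (real \<Rightarrow> real \<Rightarrow> real) set" where
  "couplings X mu nu = {G. (\<forall>y z. 0 \<le> G y z) \<and> (\<forall>y z. (y, z) \<notin> X \<times> X \<longrightarrow> G y z = 0)
      \<and> (\<forall>y\<in>X. (\<Sum>z\<in>X. G y z) = mu y) \<and> (\<forall>z\<in>X. (\<Sum>y\<in>X. G y z) = nu z)}"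

definition wasserstein :: "real set \<Rightarrow> (real \<Rightarrow> real) \<Rightarrow> (real \<Rightarrow> real) \<Rightarrow> real" where
  "wasserstein X mu nu = Inf ((\<lambda>G. \<Sum>(y, z)\<in>X \<times> X. G y z * \<bar>y - z\<bar>) ` couplings X mu nu)"

definition amb_set :: "real set \<Rightarrow> real set \<Rightarrow> 'a set \<Rightarrow> (real \<Rightarrow> 'a \<Rightarrow> real \<Rightarrow> real)
    \<Rightarrow> real \<Rightarrow> (real \<Rightarrow> 'a \<Rightarrow> real \<Rightarrow> real) set" where
  "amb_set X H A P \<delta> = {Pt. \<forall>x\<in>H. \<forall>a\<in>A. is_dist X (Pt x a) \<and> wasserstein X (Pt x a) (P x a) \<le> \<delta>}"

definition cost :: "real set \<Rightarrow> real \<Rightarrow> real" where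
  "cost U l = (if l \<in> U then 1 else 0)"

text \<open>Finite-horizon expected cost: fin_cost ... Pt n x a
  = E^{Pt}_pi [ sum_{t < min(tau, n)} c_{t+1} | X_0 = x, A_0 = a ],
  computed by conditioning on the first transition (the process stops on E \<union> U).\<close>
primrec fin_cost :: "real set \<Rightarrow> real set \<Rightarrow> real set \<Rightarrow> 'a set \<Rightarrow> (real \<Rightarrow> 'a \<Rightarrow> real)
    \<Rightarrow> (real \<Rightarrow> 'a \<Rightarrow> real \<Rightarrow> real) \<Rightarrow> nat \<Rightarrow> real \<Rightarrow> 'a \<Rightarrow> real" where
  "fin_cost X E U A \<pi> Pt 0 x a = 0"
| "fin_cost X E U A \<pi> Pt (Suc n) x a =
     (if x \<in> X - (E \<union> U) then
        (\<Sum>y\<in>X. Pt x a y * (cost U y + (\<Sum>a'\<in>A. \<pi> y a' * fin_cost X E U A \<pi> Pt n y a')))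
      else 0)"

text \<open>Expected total cost E^{Pt}_pi[ sum_{t=0}^{tau-1} c_{t+1} | X_0=x, A_0=a ]
  as the (monotone) limit of the finite-horizon costs.\<close>
definition exp_cost :: "real set \<Rightarrow> real set \<Rightarrow> real set \<Rightarrow> 'a set \<Rightarrow> (real \<Rightarrow> 'a \<Rightarrow> real)
    \<Rightarrow> (real \<Rightarrow> 'a \<Rightarrow> real \<Rightarrow> real) \<Rightarrow> real \<Rightarrow> 'a \<Rightarrow> real" where
  "exp_cost X E U A \<pi> Pt x a = (SUP n. fin_cost X E U A \<pi> Pt n x a)"

definition robust_Q :: "real set \<Rightarrow> real set \<Rightarrow> real set \<Rightarrow> 'a set \<Rightarrow> (real \<Rightarrow> 'a \<Rightarrow> real)
    \<Rightarrow> (real \<Rightarrow> 'a \<Rightarrow> real \<Rightarrow> real) \<Rightarrow> real \<Rightarrow> real \<Rightarrow> 'a \<Rightarrow> real" where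
  "robust_Q X E U A \<pi> P \<delta> x a =
     (SUP Pt\<in>amb_set X (X - (E \<union> U)) A P \<delta>. exp_cost X E U A \<pi> Pt x a)"

end

theory Submission
  imports Defs
begin

text \<open>
  The right-hand side is the Lagrangian dual of the inner worst case over the Wasserstein ball
  around \<open>P x a\<close>, so the theorem is the robust Bellman equation combined with strong duality.

  Duality: weak duality comes from integrating \<open>f l \<le> f\<^sup>c(y) + \<lambda> \<bar>l - y\<bar>\<close> against any coupling,
  where \<open>f\<^sup>c(y) = max\<^sub>l (f l - \<lambda> \<bar>l - y\<bar>)\<close>. The dual objective is convex and piecewise affine in
  \<open>\<lambda>\<close> and attains its minimum. At a minimiser, sending each \<open>y\<close> to the nearest maximiser of
  \<open>f\<^sup>c(y)\<close> is still optimal slightly to the right of \<open>\<lambda>\<close>, and sending it to the farthest one slightly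
  to the left; one-sided optimality then says that the first transport costs at most \<open>\<delta>\<close> and the
  second (if \<open>\<lambda> > 0\<close>) at least \<open>\<delta>\<close>. A mixture of the two spends exactly the budget and attains
  the dual value, so the worst case over the ball is attained and equals the dual infimum.

  Bellman equation: the robust Q-function equals the limit \<open>V\<close> of robust value iteration. Every
  admissible kernel is dominated by the iterates step by step. Conversely, for a discount
  \<open>\<beta> < 1\<close> the greedy worst-case kernel of the discounted value \<open>V\<^sub>\<beta>\<close> attains \<open>V\<^sub>\<beta>\<close>, because \<open>\<beta>\<^sup>n\<close>
  bounds what is left after \<open>n\<close> steps; since \<open>\<beta>\<^sup>n V\<^sub>n \<le> V\<^sub>\<beta>\<close>, letting \<open>\<beta> \<rightarrow> 1\<close> recovers every
  undiscounted iterate \<open>V\<^sub>n\<close>. Without discounting, a kernel that is greedy for \<open>V\<close> need not attain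
  \<open>V\<close>, since it may keep the process away from the terminal states forever.
\<close>

lemma continuous_on_MAX:
  fixes g :: "'b \<Rightarrow> 'c::topological_space \<Rightarrow> 'd::linorder_topology"
  assumes "finite S" "S \<noteq> {}" "\<And>l. l \<in> S \<Longrightarrow> continuous_on D (g l)"
  shows "continuous_on D (\<lambda>t. MAX l\<in>S. g l t)"
  using assms
proof (induction S rule: finite_ne_induct)
  case (insert l S)
  then show ?case by (simp add: continuous_on_max)
qed simp

lemma finite_lex_argmax:
  fixes g :: "'b \<Rightarrow> 'c::linorder" and h :: "'b \<Rightarrow> 'd::linorder"
  assumes "finite S" "S \<noteq> {}"
  obtains l0 where "l0 \<in> S" "\<And>l. l \<in> S \<Longrightarrow> g l \<le> g l0"
    "\<And>l. l \<in> S \<Longrightarrow> g l = g l0 \<Longrightarrow> h l \<le> h l0"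
proof -
  define S' where "S' = {l \<in> S. g l = Max (g ` S)}"
  have "Max (g ` S) \<in> g ` S" using assms by simp
  then have "S' \<noteq> {}" "finite S'" using assms(1) by (auto simp: S'_def)
  then have "Max (h ` S') \<in> h ` S'" by simp
  then obtain l0 where "l0 \<in> S'" "h l0 = Max (h ` S')" by (metis imageE)
  with \<open>finite S'\<close> show ?thesis using assms(1) by (intro that) (auto simp: S'_def)
qed

lemma eventually_at_right_argmax:
  fixes a b :: "'b \<Rightarrow> real"
  assumes "finite S"
    and max: "\<And>l. l \<in> S \<Longrightarrow> a l + t * b l \<le> a l0 + t * b l0"
    and tie: "\<And>l. l \<in> S \<Longrightarrow> a l + t * b l = a l0 + t * b l0 \<Longrightarrow> b l \<le> b l0"
  shows "eventually (\<lambda>s. \<forall>l\<in>S. a l + s * b l \<le> a l0 + s * b l0) (at_right t)"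
proof (rule eventually_ball_finite[OF \<open>finite S\<close>], intro ballI)
  fix l assume l: "l \<in> S"
  show "eventually (\<lambda>s. a l + s * b l \<le> a l0 + s * b l0) (at_right t)"
  proof (cases "a l + t * b l = a l0 + t * b l0")
    case True
    have "a l + s * b l \<le> a l0 + s * b l0" if "t < s" for s
    proof -
      have "(s - t) * b l \<le> (s - t) * b l0" using tie[OF l True] that by (simp add: mult_left_mono)
      then show ?thesis using True by (simp add: algebra_simps)
    qed
    then show ?thesis using eventually_at_right_less by (rule eventually_mono[rotated])
  next
    case False
    then have "0 < (a l0 + t * b l0) - (a l + t * b l)" using max[OF l] by simp
    moreover have "((\<lambda>s. (a l0 + s * b l0) - (a l + s * b l))
        \<longlongrightarrow> (a l0 + t * b l0) - (a l + t * b l)) (at_right t)"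
      by (intro tendsto_intros)
    ultimately have "eventually (\<lambda>s. 0 < (a l0 + s * b l0) - (a l + s * b l)) (at_right t)"
      using order_tendstoD(1) by blast
    then show ?thesis by (rule eventually_mono) simp
  qed
qed

lemma stable_maximizers_at_right:
  fixes f :: "real \<Rightarrow> real" and b :: "real \<Rightarrow> real \<Rightarrow> real"
  assumes fin: "finite X" and ne: "X \<noteq> {}"
  obtains T where "\<And>y. y \<in> X \<Longrightarrow> T y \<in> X"
    "\<And>y l. y \<in> X \<Longrightarrow> l \<in> X \<Longrightarrow> f l + t * b y l \<le> f (T y) + t * b y (T y)"
    "eventually (\<lambda>s. \<forall>y\<in>X. \<forall>l\<in>X. f l + s * b y l \<le> f (T y) + s * b y (T y)) (at_right t)"
proof -
  have "\<forall>y\<in>X. \<exists>l0. l0 \<in> X \<and> (\<forall>l\<in>X. f l + t * b y l \<le> f l0 + t * b y l0)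
      \<and> (\<forall>l\<in>X. f l + t * b y l = f l0 + t * b y l0 \<longrightarrow> b y l \<le> b y l0)"
  proof
    fix y
    obtain l0 where "l0 \<in> X" "\<And>l. l \<in> X \<Longrightarrow> f l + t * b y l \<le> f l0 + t * b y l0"
      "\<And>l. l \<in> X \<Longrightarrow> f l + t * b y l = f l0 + t * b y l0 \<Longrightarrow> b y l \<le> b y l0"
      using finite_lex_argmax[OF fin ne, of "\<lambda>l. f l + t * b y l" "b y"] by blast
    then show "\<exists>l0. l0 \<in> X \<and> (\<forall>l\<in>X. f l + t * b y l \<le> f l0 + t * b y l0)
      \<and> (\<forall>l\<in>X. f l + t * b y l = f l0 + t * b y l0 \<longrightarrow> b y l \<le> b y l0)" by blast
  qed
  then obtain T where T: "\<And>y. y \<in> X \<Longrightarrow> T y \<in> X"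
    and max: "\<And>y l. y \<in> X \<Longrightarrow> l \<in> X \<Longrightarrow> f l + t * b y l \<le> f (T y) + t * b y (T y)"
    and tie: "\<And>y l. y \<in> X \<Longrightarrow> l \<in> X \<Longrightarrow> f l + t * b y l = f (T y) + t * b y (T y) \<Longrightarrow> b y l \<le> b y (T y)"
    by (metis bchoice)
  have "eventually (\<lambda>s. \<forall>y\<in>X. \<forall>l\<in>X. f l + s * b y l \<le> f (T y) + s * b y (T y)) (at_right t)"
    using fin max tie by (intro eventually_ball_finite ballI eventually_at_right_argmax) auto
  with T max show ?thesis by (rule that)
qed

lemma convex_weight_exists:
  fixes a b c :: real
  assumes "a \<le> c" "c \<le> b"
  obtains \<theta> where "0 \<le> \<theta>" "\<theta> \<le> 1" "\<theta> * a + (1 - \<theta>) * b = c"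
proof (cases "a = b")
  case False
  then have "a < b" using assms by simp
  define \<theta> where "\<theta> = (b - c) / (b - a)"
  have "\<theta> * (b - a) = b - c" using \<open>a < b\<close> unfolding \<theta>_def by simp
  then have "\<theta> * a + (1 - \<theta>) * b = c" by (simp add: algebra_simps)
  moreover have "0 \<le> \<theta>" "\<theta> \<le> 1" using assms \<open>a < b\<close> unfolding \<theta>_def by (auto simp: field_simps)
  ultimately show ?thesis using that by blast
next
  case True
  then show ?thesis using assms by (intro that[of 1]) auto
qed

lemma power_mult_le_imp_le:
  fixes c d :: real
  assumes "\<And>\<beta>. 0 \<le> \<beta> \<Longrightarrow> \<beta> < 1 \<Longrightarrow> \<beta> ^ n * c \<le> d"
  shows "c \<le> d"
proof (rule tendsto_upperbound)
  have "((\<lambda>\<beta>. \<beta> ^ n * c) \<longlongrightarrow> 1 ^ n * c) (at_left 1)"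
    by (intro tendsto_intros)
  then show "((\<lambda>\<beta>. \<beta> ^ n * c) \<longlongrightarrow> c) (at_left 1)" by simp
  show "\<forall>\<^sub>F \<beta> in at_left 1. \<beta> ^ n * c \<le> d"
    using eventually_at_left_real[of 0 1] by (rule eventually_mono) (auto intro: assms)
qed (rule trivial_limit_at_left_real)

section \<open>Duality for Wasserstein balls on a finite subset of the line\<close>

definition wasserstein_ball :: "real set \<Rightarrow> (real \<Rightarrow> real) \<Rightarrow> real \<Rightarrow> (real \<Rightarrow> real) set" where
  "wasserstein_ball X Pd \<delta> = {q. is_dist X q \<and> wasserstein X q Pd \<le> \<delta>}"

definition c_transform :: "real set \<Rightarrow> (real \<Rightarrow> real) \<Rightarrow> real \<Rightarrow> real \<Rightarrow> real" where
  "c_transform X f lam y = (MAX l\<in>X. - lam * \<bar>l - y\<bar> + f l)"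

definition dual_objective :: "real set \<Rightarrow> (real \<Rightarrow> real) \<Rightarrow> real \<Rightarrow> (real \<Rightarrow> real) \<Rightarrow> real \<Rightarrow> real" where
  "dual_objective X Pd \<delta> f lam = lam * \<delta> + (\<Sum>y\<in>X. c_transform X f lam y * Pd y)"

definition attains_c_transform :: "real set \<Rightarrow> (real \<Rightarrow> real) \<Rightarrow> real \<Rightarrow> (real \<Rightarrow> real) \<Rightarrow> bool" where
  "attains_c_transform X f lam T \<longleftrightarrow>
     (\<forall>y\<in>X. T y \<in> X \<and> (\<forall>l\<in>X. - lam * \<bar>l - y\<bar> + f l \<le> - lam * \<bar>T y - y\<bar> + f (T y)))"

definition map_cost :: "real set \<Rightarrow> (real \<Rightarrow> real) \<Rightarrow> (real \<Rightarrow> real) \<Rightarrow> real" where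
  "map_cost X Pd T = (\<Sum>y\<in>X. Pd y * \<bar>T y - y\<bar>)"

definition kernel_push :: "real set \<Rightarrow> (real \<Rightarrow> real) \<Rightarrow> (real \<Rightarrow> real \<Rightarrow> real) \<Rightarrow> real \<Rightarrow> real" where
  "kernel_push X Pd K l = (\<Sum>y\<in>X. Pd y * K y l)"

definition transport_cost :: "real set \<Rightarrow> (real \<Rightarrow> real) \<Rightarrow> (real \<Rightarrow> real \<Rightarrow> real) \<Rightarrow> real" where
  "transport_cost X Pd K = (\<Sum>y\<in>X. Pd y * (\<Sum>l\<in>X. K y l * \<bar>l - y\<bar>))"

definition mixed_transport :: "real \<Rightarrow> (real \<Rightarrow> real) \<Rightarrow> (real \<Rightarrow> real) \<Rightarrow> real \<Rightarrow> real \<Rightarrow> real" where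
  "mixed_transport \<theta> T1 T2 y l = \<theta> * of_bool (l = T1 y) + (1 - \<theta>) * of_bool (l = T2 y)"

lemma wasserstein_le_coupling:
  assumes "G \<in> couplings X mu nu"
  shows "wasserstein X mu nu \<le> (\<Sum>(y, z)\<in>X \<times> X. G y z * \<bar>y - z\<bar>)"
  unfolding wasserstein_def
proof (rule cInf_lower)
  show "bdd_below ((\<lambda>G. \<Sum>(y, z)\<in>X \<times> X. G y z * \<bar>y - z\<bar>) ` couplings X mu nu)"
    by (rule bdd_belowI[of _ 0]) (auto simp: couplings_def intro!: sum_nonneg)
qed (use assms in blast)

lemma sum_kernel_push:
  "finite X \<Longrightarrow> (\<Sum>l\<in>X. kernel_push X Pd K l * f l) = (\<Sum>y\<in>X. Pd y * (\<Sum>l\<in>X. K y l * f l))"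
  unfolding kernel_push_def sum_distrib_right sum_distrib_left
  by (subst sum.swap) (simp add: mult.assoc)

lemma kernel_push_in_wasserstein_ball:
  assumes fin: "finite X" and Pd: "is_dist X Pd" and K: "\<And>y. y \<in> X \<Longrightarrow> is_dist X (K y)"
    and cost: "transport_cost X Pd K \<le> \<delta>"
  shows "kernel_push X Pd K \<in> wasserstein_ball X Pd \<delta>"
proof -
  define G where "G l y = Pd y * K y l" for l y
  have Pd_nonneg: "0 \<le> Pd y" and Pd_zero: "y \<notin> X \<Longrightarrow> Pd y = 0" and Pd_sum: "sum Pd X = 1" for y
    using Pd by (auto simp: is_dist_def)
  have K_nonneg: "0 \<le> K y l" and K_zero: "l \<notin> X \<Longrightarrow> K y l = 0" and K_sum: "sum (K y) X = 1"
    if "y \<in> X" for y l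
    using K[OF that] by (auto simp: is_dist_def)
  have "0 \<le> G l y" and "(l, y) \<notin> X \<times> X \<Longrightarrow> G l y = 0" for l y
    by (cases "y \<in> X"; auto simp: G_def Pd_zero K_zero Pd_nonneg K_nonneg)+
  then have G: "G \<in> couplings X (kernel_push X Pd K) Pd"
    unfolding couplings_def by (auto simp: G_def kernel_push_def sum_distrib_left[symmetric] K_sum)
  have "(\<Sum>l\<in>X. kernel_push X Pd K l) = 1"
    using sum_kernel_push[OF fin, of Pd K "\<lambda>_. 1"] by (simp add: K_sum Pd_sum)
  then have "is_dist X (kernel_push X Pd K)"
    unfolding is_dist_def kernel_push_def
    by (auto simp: Pd_zero K_zero Pd_nonneg K_nonneg intro!: sum_nonneg)
  moreover have "(\<Sum>(l, y)\<in>X \<times> X. G l y * \<bar>l - y\<bar>) = transport_cost X Pd K"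
    unfolding G_def transport_cost_def sum.cartesian_product[symmetric]
    by (subst sum.swap) (simp add: sum_distrib_left mult.assoc)
  ultimately show ?thesis
    using wasserstein_le_coupling[OF G] cost by (simp add: wasserstein_ball_def)
qed

lemma sum_mixed_transport:
  assumes "finite X" "T1 y \<in> X" "T2 y \<in> X"
  shows "(\<Sum>l\<in>X. mixed_transport \<theta> T1 T2 y l * g l) = \<theta> * g (T1 y) + (1 - \<theta>) * g (T2 y)"
proof -
  have point_mass: "(\<Sum>l\<in>X. of_bool (l = c) * g l) = g c" if "c \<in> X" for c
  proof -
    have "(\<Sum>l\<in>X. of_bool (l = c) * g l) = (\<Sum>l\<in>X. if l = c then g l else 0)"
      by (rule sum.cong) auto
    then show ?thesis using assms(1) that by simp
  qed
  have "(\<Sum>l\<in>X. mixed_transport \<theta> T1 T2 y l * g l)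
      = \<theta> * (\<Sum>l\<in>X. of_bool (l = T1 y) * g l) + (1 - \<theta>) * (\<Sum>l\<in>X. of_bool (l = T2 y) * g l)"
    by (simp add: mixed_transport_def distrib_right sum.distrib mult.assoc flip: sum_distrib_left)
  then show ?thesis using point_mass assms(2,3) by simp
qed

lemma mixed_transport_dist:
  assumes "finite X" "T1 y \<in> X" "T2 y \<in> X" "0 \<le> \<theta>" "\<theta> \<le> 1"
  shows "is_dist X (mixed_transport \<theta> T1 T2 y)"
proof -
  have "(\<Sum>l\<in>X. mixed_transport \<theta> T1 T2 y l * 1) = \<theta> * 1 + (1 - \<theta>) * 1"
    by (rule sum_mixed_transport) (use assms in auto)
  then show ?thesis using assms unfolding is_dist_def by (auto simp: mixed_transport_def)
qed

lemma transport_cost_mixed_transport: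
  assumes "finite X" "\<And>y. y \<in> X \<Longrightarrow> T1 y \<in> X" "\<And>y. y \<in> X \<Longrightarrow> T2 y \<in> X"
  shows "transport_cost X Pd (mixed_transport \<theta> T1 T2) = \<theta> * map_cost X Pd T1 + (1 - \<theta>) * map_cost X Pd T2"
  unfolding transport_cost_def map_cost_def using assms
  by (simp add: sum_mixed_transport distrib_left sum.distrib mult.left_commute[of "Pd _"]
      flip: sum_distrib_left)

lemma c_transform_ge: "finite X \<Longrightarrow> l \<in> X \<Longrightarrow> - lam * \<bar>l - y\<bar> + f l \<le> c_transform X f lam y"
  unfolding c_transform_def by (rule Max_ge) auto

lemma c_transform_eqI:
  assumes "finite X" "l0 \<in> X" "\<And>l. l \<in> X \<Longrightarrow> - lam * \<bar>l - y\<bar> + f l \<le> - lam * \<bar>l0 - y\<bar> + f l0"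
  shows "c_transform X f lam y = - lam * \<bar>l0 - y\<bar> + f l0"
  unfolding c_transform_def using assms by (intro Max_eqI) auto

lemma c_transform_attained:
  "finite X \<Longrightarrow> attains_c_transform X f lam T \<Longrightarrow> y \<in> X
    \<Longrightarrow> c_transform X f lam y = - lam * \<bar>T y - y\<bar> + f (T y)"
  unfolding attains_c_transform_def by (intro c_transform_eqI) auto

lemma c_transform_eq_for_large_multiplier:
  assumes "finite X"
  obtains L where "0 \<le> L" "\<And>lam y. L \<le> lam \<Longrightarrow> y \<in> X \<Longrightarrow> c_transform X f lam y = f y"
proof
  define L where "L = Max (insert 0 ((\<lambda>(l, y). (f l - f y) / \<bar>l - y\<bar>) ` (X \<times> X)))"
  show "0 \<le> L" unfolding L_def using assms by simp
  fix lam y assume lam: "L \<le> lam" and y: "y \<in> X"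
  have "- lam * \<bar>l - y\<bar> + f l \<le> - lam * \<bar>y - y\<bar> + f y" if l: "l \<in> X" for l
  proof (cases "l = y")
    case False
    have "(f l - f y) / \<bar>l - y\<bar> \<le> L" unfolding L_def using assms l y by (intro Max_ge) auto
    then have "f l - f y \<le> L * \<bar>l - y\<bar>" using False by (simp add: divide_le_eq)
    also have "\<dots> \<le> lam * \<bar>l - y\<bar>" using lam by (simp add: mult_right_mono)
    finally show ?thesis by simp
  qed simp
  then show "c_transform X f lam y = f y" using c_transform_eqI[OF assms y] by simp
qed

lemma sum_le_c_transform_coupling:
  assumes fin: "finite X" and G: "G \<in> couplings X q Pd"
  shows "(\<Sum>l\<in>X. q l * f l)
    \<le> (\<Sum>y\<in>X. c_transform X f lam y * Pd y) + lam * (\<Sum>(l, y)\<in>X \<times> X. G l y * \<bar>l - y\<bar>)"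
proof -
  have G_nonneg: "0 \<le> G l y" for l y using G by (simp add: couplings_def)
  have "(\<Sum>l\<in>X. q l * f l) = (\<Sum>l\<in>X. \<Sum>y\<in>X. G l y * f l)"
    using G by (auto simp: couplings_def sum_distrib_right[symmetric] intro!: sum.cong)
  also have "\<dots> \<le> (\<Sum>l\<in>X. \<Sum>y\<in>X. G l y * c_transform X f lam y + lam * (G l y * \<bar>l - y\<bar>))"
  proof (intro sum_mono)
    fix l y assume "l \<in> X" "y \<in> X"
    then have "f l \<le> c_transform X f lam y + lam * \<bar>l - y\<bar>"
      using c_transform_ge[OF fin, of l lam y f] by linarith
    then have "G l y * f l \<le> G l y * (c_transform X f lam y + lam * \<bar>l - y\<bar>)"
      by (rule mult_left_mono) (rule G_nonneg)
    then show "G l y * f l \<le> G l y * c_transform X f lam y + lam * (G l y * \<bar>l - y\<bar>)"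
      by (simp add: algebra_simps)
  qed
  also have "\<dots> = (\<Sum>l\<in>X. \<Sum>y\<in>X. G l y * c_transform X f lam y)
      + lam * (\<Sum>l\<in>X. \<Sum>y\<in>X. G l y * \<bar>l - y\<bar>)"
    by (simp add: sum.distrib sum_distrib_left)
  also have "(\<Sum>l\<in>X. \<Sum>y\<in>X. G l y * c_transform X f lam y)
      = (\<Sum>y\<in>X. \<Sum>l\<in>X. G l y * c_transform X f lam y)"
    by (rule sum.swap)
  also have "\<dots> = (\<Sum>y\<in>X. c_transform X f lam y * Pd y)"
    using G by (auto simp: couplings_def sum_distrib_right[symmetric] intro!: sum.cong)
  also have "(\<Sum>l\<in>X. \<Sum>y\<in>X. G l y * \<bar>l - y\<bar>) = (\<Sum>(l, y)\<in>X \<times> X. G l y * \<bar>l - y\<bar>)"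
    by (simp add: sum.cartesian_product)
  finally show ?thesis .
qed

lemma weak_duality:
  assumes fin: "finite X" and Pd: "is_dist X Pd" and q: "q \<in> wasserstein_ball X Pd \<delta>" and lam: "0 \<le> lam"
  shows "(\<Sum>l\<in>X. q l * f l) \<le> dual_objective X Pd \<delta> f lam"
proof -
  define S where "S = (\<Sum>y\<in>X. c_transform X f lam y * Pd y)"
  have gap: "(\<Sum>l\<in>X. q l * f l) - S \<le> lam * (\<Sum>(l, y)\<in>X \<times> X. G l y * \<bar>l - y\<bar>)"
    if "G \<in> couplings X q Pd" for G
    using sum_le_c_transform_coupling[OF fin that, of f lam] unfolding S_def by simp
  have "(\<lambda>l y. q l * Pd y) \<in> couplings X q Pd"
    using q Pd unfolding couplings_def wasserstein_ball_def is_dist_def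
    by (auto simp: sum_distrib_left[symmetric] sum_distrib_right[symmetric])
  then have couplings_ne: "couplings X q Pd \<noteq> {}" by blast
  have "(\<Sum>l\<in>X. q l * f l) - S \<le> lam * \<delta>"
  proof (cases "lam = 0")
    case True
    then show ?thesis using gap couplings_ne by auto
  next
    case False
    then have "((\<Sum>l\<in>X. q l * f l) - S) / lam \<le> wasserstein X q Pd"
      unfolding wasserstein_def using gap lam couplings_ne
      by (intro cInf_greatest) (auto simp: divide_le_eq mult.commute)
    then show ?thesis using q lam False
      by (auto simp: wasserstein_ball_def divide_le_eq mult.commute intro: order_trans)
  qed
  then show ?thesis unfolding dual_objective_def S_def by simp
qed

lemma dual_objective_attains_min:
  assumes fin: "finite X" and ne: "X \<noteq> {}" and "0 \<le> \<delta>"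
  obtains lam where "0 \<le> lam"
    "\<And>lam'. 0 \<le> lam' \<Longrightarrow> dual_objective X Pd \<delta> f lam \<le> dual_objective X Pd \<delta> f lam'"
proof -
  obtain L where L: "0 \<le> L" "\<And>lam y. L \<le> lam \<Longrightarrow> y \<in> X \<Longrightarrow> c_transform X f lam y = f y"
    using c_transform_eq_for_large_multiplier[OF fin] by blast
  have "continuous_on {0..L} (dual_objective X Pd \<delta> f)"
    unfolding dual_objective_def c_transform_def using fin ne
    by (intro continuous_intros continuous_on_MAX) auto
  then obtain lam where lam: "lam \<in> {0..L}"
    and min: "\<And>lam'. lam' \<in> {0..L} \<Longrightarrow> dual_objective X Pd \<delta> f lam \<le> dual_objective X Pd \<delta> f lam'"
    using continuous_attains_inf[of "{0..L}"] L(1) by fastforce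
  have large: "dual_objective X Pd \<delta> f lam' = lam' * \<delta> + (\<Sum>y\<in>X. f y * Pd y)" if "L \<le> lam'" for lam'
    unfolding dual_objective_def using L(2)[OF that] by simp
  have "dual_objective X Pd \<delta> f lam \<le> dual_objective X Pd \<delta> f lam'" if "0 \<le> lam'" for lam'
  proof (cases "lam' \<le> L")
    case False
    then have "dual_objective X Pd \<delta> f L \<le> dual_objective X Pd \<delta> f lam'"
      using large \<open>0 \<le> \<delta>\<close> by (simp add: mult_right_mono)
    then show ?thesis using min[of L] L(1) by simp
  qed (use min that in simp)
  then show ?thesis using lam by (intro that[of lam]) auto
qed

lemma dual_objective_eq_transport:
  assumes "finite X" "attains_c_transform X f lam T"
  shows "dual_objective X Pd \<delta> f lam = lam * (\<delta> - map_cost X Pd T) + (\<Sum>y\<in>X. Pd y * f (T y))"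
proof -
  have "dual_objective X Pd \<delta> f lam = lam * \<delta> + (\<Sum>y\<in>X. (- lam * \<bar>T y - y\<bar> + f (T y)) * Pd y)"
    unfolding dual_objective_def using c_transform_attained[OF assms] by simp
  then show ?thesis
    by (simp add: map_cost_def algebra_simps sum.distrib sum_subtractf sum_distrib_left)
qed

lemma sum_kernel_push_maximizers:
  assumes fin: "finite X" and K: "\<And>y. y \<in> X \<Longrightarrow> is_dist X (K y)"
    and supp: "\<And>y l. y \<in> X \<Longrightarrow> l \<in> X \<Longrightarrow> K y l \<noteq> 0 \<Longrightarrow> - lam * \<bar>l - y\<bar> + f l = c_transform X f lam y"
  shows "(\<Sum>l\<in>X. kernel_push X Pd K l * f l)
    = dual_objective X Pd \<delta> f lam + lam * (transport_cost X Pd K - \<delta>)"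
proof -
  have "(\<Sum>l\<in>X. K y l * f l) = c_transform X f lam y + lam * (\<Sum>l\<in>X. K y l * \<bar>l - y\<bar>)"
    if y: "y \<in> X" for y
  proof -
    have "K y l * f l = K y l * (c_transform X f lam y + lam * \<bar>l - y\<bar>)" if l: "l \<in> X" for l
      using supp[OF y l] by (cases "K y l = 0") auto
    then have "(\<Sum>l\<in>X. K y l * f l) = (\<Sum>l\<in>X. K y l * (c_transform X f lam y + lam * \<bar>l - y\<bar>))"
      by (rule sum.cong[OF refl])
    also have "\<dots> = c_transform X f lam y * (\<Sum>l\<in>X. K y l) + lam * (\<Sum>l\<in>X. K y l * \<bar>l - y\<bar>)"
      by (simp add: algebra_simps sum.distrib sum_distrib_left sum_distrib_right)
    finally show ?thesis using K[OF y] by (simp add: is_dist_def)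
  qed
  then show ?thesis
    unfolding sum_kernel_push[OF fin] dual_objective_def transport_cost_def
    by (simp add: algebra_simps sum.distrib sum_distrib_left)
qed

lemma dual_minimizer_nearest_transport:
  assumes fin: "finite X" and ne: "X \<noteq> {}" and lam: "0 \<le> lam"
    and min: "\<And>lam'. 0 \<le> lam' \<Longrightarrow> dual_objective X Pd \<delta> f lam \<le> dual_objective X Pd \<delta> f lam'"
  obtains T where "attains_c_transform X f lam T" "map_cost X Pd T \<le> \<delta>"
proof -
  obtain T where T: "\<And>y. y \<in> X \<Longrightarrow> T y \<in> X"
    and max: "\<And>y l. y \<in> X \<Longrightarrow> l \<in> X \<Longrightarrow> f l + lam * - \<bar>l - y\<bar> \<le> f (T y) + lam * - \<bar>T y - y\<bar>"
    and right: "eventually (\<lambda>s. \<forall>y\<in>X. \<forall>l\<in>X. f l + s * - \<bar>l - y\<bar> \<le> f (T y) + s * - \<bar>T y - y\<bar>)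
      (at_right lam)"
    using stable_maximizers_at_right[OF fin ne, where f=f and t=lam and b="\<lambda>y l. - \<bar>l - y\<bar>"] by blast
  obtain s where "lam < s" and max_s: "\<forall>y\<in>X. \<forall>l\<in>X. f l + s * - \<bar>l - y\<bar> \<le> f (T y) + s * - \<bar>T y - y\<bar>"
    using eventually_happens'[OF trivial_limit_at_right_real eventually_conj[OF eventually_at_right_less right]]
    by blast
  have attains: "attains_c_transform X f t T" if "t \<in> {lam, s}" for t
    using that T max max_s unfolding attains_c_transform_def by auto
  have "lam * (\<delta> - map_cost X Pd T) \<le> s * (\<delta> - map_cost X Pd T)"
    using min[of s] lam \<open>lam < s\<close> dual_objective_eq_transport[OF fin attains] by simp
  then have "0 \<le> (s - lam) * (\<delta> - map_cost X Pd T)" by (simp add: algebra_simps)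
  with \<open>lam < s\<close> have "map_cost X Pd T \<le> \<delta>" by (simp add: zero_le_mult_iff)
  with attains show ?thesis by (intro that) auto
qed

lemma dual_minimizer_farthest_transport:
  assumes fin: "finite X" and ne: "X \<noteq> {}" and lam: "0 < lam"
    and min: "\<And>lam'. 0 \<le> lam' \<Longrightarrow> dual_objective X Pd \<delta> f lam \<le> dual_objective X Pd \<delta> f lam'"
  obtains T where "attains_c_transform X f lam T" "\<delta> \<le> map_cost X Pd T"
proof -
  \<comment> \<open>Maximisers in the reflected parameter \<open>- lam\<close> stay optimal for multipliers slightly below \<open>lam\<close>.\<close>
  obtain T where T: "\<And>y. y \<in> X \<Longrightarrow> T y \<in> X"
    and max: "\<And>y l. y \<in> X \<Longrightarrow> l \<in> X \<Longrightarrow> f l + - lam * \<bar>l - y\<bar> \<le> f (T y) + - lam * \<bar>T y - y\<bar>"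
    and left: "eventually (\<lambda>s. \<forall>y\<in>X. \<forall>l\<in>X. f l + s * \<bar>l - y\<bar> \<le> f (T y) + s * \<bar>T y - y\<bar>)
      (at_right (- lam))"
    using stable_maximizers_at_right[OF fin ne, where f=f and t="- lam" and b="\<lambda>y l. \<bar>l - y\<bar>"] by blast
  have "eventually (\<lambda>s. s < 0) (at_right (- lam))"
    using lam by (intro order_tendstoD(2)[OF tendsto_ident_at]) simp
  then obtain s where "- lam < s" "s < 0"
    and max_s: "\<forall>y\<in>X. \<forall>l\<in>X. f l + s * \<bar>l - y\<bar> \<le> f (T y) + s * \<bar>T y - y\<bar>"
    using eventually_happens'[OF trivial_limit_at_right_real
        eventually_conj[OF eventually_at_right_less eventually_conj[OF _ left]]]
    by blast
  have attains: "attains_c_transform X f t T" if "t \<in> {lam, - s}" for t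
    using that T max max_s unfolding attains_c_transform_def by auto
  have "lam * (\<delta> - map_cost X Pd T) \<le> - s * (\<delta> - map_cost X Pd T)"
    using min[of "- s"] \<open>s < 0\<close> dual_objective_eq_transport[OF fin attains] by simp
  then have "0 \<le> (- s - lam) * (\<delta> - map_cost X Pd T)" by (simp add: algebra_simps)
  with \<open>- lam < s\<close> have "\<delta> \<le> map_cost X Pd T" by (simp add: zero_le_mult_iff)
  with attains show ?thesis by (intro that) auto
qed

lemma dual_minimizer_balanced_transports:
  assumes fin: "finite X" and ne: "X \<noteq> {}" and lam: "0 \<le> lam"
    and min: "\<And>lam'. 0 \<le> lam' \<Longrightarrow> dual_objective X Pd \<delta> f lam \<le> dual_objective X Pd \<delta> f lam'"
  obtains T1 T2 \<theta> where "attains_c_transform X f lam T1" "attains_c_transform X f lam T2"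
    "0 \<le> \<theta>" "\<theta> \<le> 1" "\<theta> * map_cost X Pd T1 + (1 - \<theta>) * map_cost X Pd T2 \<le> \<delta>"
    "lam * (\<theta> * map_cost X Pd T1 + (1 - \<theta>) * map_cost X Pd T2) = lam * \<delta>"
proof -
  obtain T1 where T1: "attains_c_transform X f lam T1" and cost1: "map_cost X Pd T1 \<le> \<delta>"
    using dual_minimizer_nearest_transport[OF fin ne lam min] by blast
  show ?thesis
  proof (cases "lam = 0")
    case True
    then show ?thesis using that[OF T1 T1, of 1] cost1 by simp
  next
    case False
    then obtain T2 where T2: "attains_c_transform X f lam T2" and cost2: "\<delta> \<le> map_cost X Pd T2"
      using dual_minimizer_farthest_transport[OF fin ne _ min] lam by force
    obtain \<theta> where "0 \<le> \<theta>" "\<theta> \<le> 1" "\<theta> * map_cost X Pd T1 + (1 - \<theta>) * map_cost X Pd T2 = \<delta>"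
      using convex_weight_exists[OF cost1 cost2] by blast
    then show ?thesis using that[OF T1 T2] by simp
  qed
qed

lemma strong_duality:
  assumes fin: "finite X" and Pd: "is_dist X Pd" and \<delta>: "0 \<le> \<delta>"
  obtains lam p where "0 \<le> lam" "p \<in> wasserstein_ball X Pd \<delta>"
    "dual_objective X Pd \<delta> f lam \<le> (\<Sum>l\<in>X. p l * f l)"
proof -
  have ne: "X \<noteq> {}" using Pd by (auto simp: is_dist_def)
  obtain lam where lam: "0 \<le> lam"
    and min: "\<And>lam'. 0 \<le> lam' \<Longrightarrow> dual_objective X Pd \<delta> f lam \<le> dual_objective X Pd \<delta> f lam'"
    using dual_objective_attains_min[OF fin ne \<delta>] by blast
  obtain T1 T2 \<theta> where T1: "attains_c_transform X f lam T1" and T2: "attains_c_transform X f lam T2"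
    and \<theta>: "0 \<le> \<theta>" "\<theta> \<le> 1"
    and cost: "\<theta> * map_cost X Pd T1 + (1 - \<theta>) * map_cost X Pd T2 \<le> \<delta>"
    and tight: "lam * (\<theta> * map_cost X Pd T1 + (1 - \<theta>) * map_cost X Pd T2) = lam * \<delta>"
    using dual_minimizer_balanced_transports[OF fin ne lam min] by blast
  define K where "K = mixed_transport \<theta> T1 T2"
  have into: "T1 y \<in> X" "T2 y \<in> X" if "y \<in> X" for y
    using T1 T2 that by (auto simp: attains_c_transform_def)
  have K_dist: "is_dist X (K y)" if "y \<in> X" for y
    unfolding K_def using into[OF that] \<theta> by (intro mixed_transport_dist[OF fin])
  have K_cost: "transport_cost X Pd K = \<theta> * map_cost X Pd T1 + (1 - \<theta>) * map_cost X Pd T2"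
    unfolding K_def using into by (intro transport_cost_mixed_transport[OF fin])
  have supp: "- lam * \<bar>l - y\<bar> + f l = c_transform X f lam y" if "y \<in> X" "K y l \<noteq> 0" for y l
  proof -
    have "l = T1 y \<or> l = T2 y" using that(2) by (auto simp: K_def mixed_transport_def)
    then show ?thesis using c_transform_attained[OF fin T1 that(1)] c_transform_attained[OF fin T2 that(1)]
      by auto
  qed
  have "(\<Sum>l\<in>X. kernel_push X Pd K l * f l)
      = dual_objective X Pd \<delta> f lam + lam * (transport_cost X Pd K - \<delta>)"
    by (rule sum_kernel_push_maximizers[OF fin]) (use K_dist supp in auto)
  also have "\<dots> = dual_objective X Pd \<delta> f lam"
    using tight K_cost by (simp add: right_diff_distrib)
  moreover have "kernel_push X Pd K \<in> wasserstein_ball X Pd \<delta>"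
    by (rule kernel_push_in_wasserstein_ball[OF fin Pd]) (use K_dist K_cost cost in auto)
  ultimately show ?thesis using lam by (intro that) auto
qed

lemma wasserstein_dro_duality:
  assumes fin: "finite X" and Pd: "is_dist X Pd" and \<delta>: "0 \<le> \<delta>"
  obtains p where "p \<in> wasserstein_ball X Pd \<delta>"
    "\<And>q. q \<in> wasserstein_ball X Pd \<delta> \<Longrightarrow> (\<Sum>l\<in>X. q l * f l) \<le> (\<Sum>l\<in>X. p l * f l)"
    "(INF lam\<in>{0..}. dual_objective X Pd \<delta> f lam) = (\<Sum>l\<in>X. p l * f l)"
proof -
  obtain lam p where lam: "0 \<le> lam" and p: "p \<in> wasserstein_ball X Pd \<delta>"
    and strong: "dual_objective X Pd \<delta> f lam \<le> (\<Sum>l\<in>X. p l * f l)"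
    using strong_duality[OF fin Pd \<delta>] by blast
  note weak = weak_duality[OF fin Pd]
  have "(INF lam\<in>{0..}. dual_objective X Pd \<delta> f lam) = (\<Sum>l\<in>X. p l * f l)"
  proof (rule antisym)
    have "bdd_below (dual_objective X Pd \<delta> f ` {0..})"
      using weak[OF p] by (intro bdd_belowI2) simp
    then show "(INF lam\<in>{0..}. dual_objective X Pd \<delta> f lam) \<le> (\<Sum>l\<in>X. p l * f l)"
      using cINF_lower[of _ "{0..}" lam] lam strong by fastforce
  qed (use weak[OF p] in \<open>auto intro: cINF_greatest\<close>)
  moreover have "(\<Sum>l\<in>X. q l * f l) \<le> (\<Sum>l\<in>X. p l * f l)" if "q \<in> wasserstein_ball X Pd \<delta>" for q
    using weak[OF that lam, of f] strong by simp
  ultimately show ?thesis using p that by blast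
qed

section \<open>The robust Bellman equation\<close>

locale finite_robust_mdp =
  fixes X E U :: "real set" and A :: "'a set" and P :: "real \<Rightarrow> 'a \<Rightarrow> real \<Rightarrow> real"
    and \<pi> :: "real \<Rightarrow> 'a \<Rightarrow> real" and \<delta> :: real
  assumes finite_X: "finite X" and \<delta>_nonneg: "0 \<le> \<delta>"
    and P_dist: "\<And>x a. x \<in> X - (E \<union> U) \<Longrightarrow> a \<in> A \<Longrightarrow> is_dist X (P x a)"
    and \<pi>_dist: "\<And>x. x \<in> X \<Longrightarrow> is_dist A (\<pi> x)"
begin

abbreviation H :: "real set" where "H \<equiv> X - (E \<union> U)"

definition backup :: "real \<Rightarrow> (real \<Rightarrow> 'a \<Rightarrow> real) \<Rightarrow> real \<Rightarrow> real" where
  "backup \<beta> u l = cost U l + \<beta> * (\<Sum>a'\<in>A. \<pi> l a' * u l a')"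

definition expected_backup :: "real \<Rightarrow> (real \<Rightarrow> 'a \<Rightarrow> real) \<Rightarrow> (real \<Rightarrow> real) \<Rightarrow> real" where
  "expected_backup \<beta> u q = (\<Sum>l\<in>X. q l * backup \<beta> u l)"

definition bellman :: "real \<Rightarrow> (real \<Rightarrow> 'a \<Rightarrow> real) \<Rightarrow> real \<Rightarrow> 'a \<Rightarrow> real" where
  "bellman \<beta> u y a =
     (if y \<in> H then (SUP q\<in>wasserstein_ball X (P y a) \<delta>. expected_backup \<beta> u q) else 0)"

definition value_iter :: "real \<Rightarrow> nat \<Rightarrow> real \<Rightarrow> 'a \<Rightarrow> real" where
  "value_iter \<beta> n = (bellman \<beta> ^^ n) (\<lambda>_ _. 0)"

definition opt_value :: "real \<Rightarrow> real \<Rightarrow> 'a \<Rightarrow> real" where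
  "opt_value \<beta> y a = (SUP n. value_iter \<beta> n y a)"

definition unit_valued :: "(real \<Rightarrow> 'a \<Rightarrow> real) \<Rightarrow> bool" where
  "unit_valued u \<longleftrightarrow> (\<forall>y a. y \<notin> H \<longrightarrow> u y a = 0) \<and> (\<forall>y. \<forall>a\<in>A. 0 \<le> u y a \<and> u y a \<le> 1)"

abbreviation kernels :: "(real \<Rightarrow> 'a \<Rightarrow> real \<Rightarrow> real) set" where
  "kernels \<equiv> amb_set X H A P \<delta>"

lemma \<pi>_nonneg: "l \<in> X \<Longrightarrow> 0 \<le> \<pi> l a'"
  and \<pi>_sum: "l \<in> X \<Longrightarrow> (\<Sum>a'\<in>A. \<pi> l a') = 1"
  using \<pi>_dist by (auto simp: is_dist_def)

lemma kernels_iff: "Pt \<in> kernels \<longleftrightarrow> (\<forall>y\<in>H. \<forall>a\<in>A. Pt y a \<in> wasserstein_ball X (P y a) \<delta>)"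
  by (simp add: amb_set_def wasserstein_ball_def)

lemma bellman_outside: "y \<notin> H \<Longrightarrow> bellman \<beta> u y a = 0"
  unfolding bellman_def by (simp del: Diff_iff)

lemma expected_backup_mono:
  assumes "\<And>l a'. l \<in> X \<Longrightarrow> a' \<in> A \<Longrightarrow> u l a' \<le> v l a'" "is_dist X q" "0 \<le> \<beta>"
  shows "expected_backup \<beta> u q \<le> expected_backup \<beta> v q"
  unfolding expected_backup_def backup_def using assms \<pi>_nonneg
  by (auto simp: is_dist_def intro!: sum_mono mult_left_mono add_left_mono)

lemma expected_backup_add_const:
  assumes "is_dist X q"
  shows "expected_backup \<beta> (\<lambda>l a'. u l a' + c) q = expected_backup \<beta> u q + \<beta> * c"
proof -
  have "expected_backup \<beta> (\<lambda>l a'. u l a' + c) q = expected_backup \<beta> u q + \<beta> * c * (\<Sum>l\<in>X. q l * (\<Sum>a'\<in>A. \<pi> l a'))"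
    unfolding expected_backup_def backup_def by (simp add: algebra_simps sum.distrib sum_distrib_left)
  then show ?thesis using assms \<pi>_sum by (simp add: is_dist_def)
qed

lemma expected_backup_le_undiscounted:
  assumes "unit_valued u" "is_dist X q" "\<beta> \<le> 1"
  shows "expected_backup \<beta> u q \<le> expected_backup 1 u q"
proof -
  have "\<beta> * (\<Sum>a'\<in>A. \<pi> l a' * u l a') \<le> (\<Sum>a'\<in>A. \<pi> l a' * u l a')" if "l \<in> X" for l
    using mult_right_mono[OF assms(3), of "\<Sum>a'\<in>A. \<pi> l a' * u l a'"] assms(1) \<pi>_nonneg[OF that]
    by (simp add: unit_valued_def sum_nonneg)
  then show ?thesis
    unfolding expected_backup_def backup_def using assms(2) by (auto simp: is_dist_def intro!: sum_mono mult_left_mono)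
qed

lemma expected_backup_power_discount:
  assumes "is_dist X q" "0 \<le> \<beta>" "\<beta> \<le> 1"
  shows "\<beta> ^ Suc n * expected_backup 1 u q \<le> expected_backup \<beta> (\<lambda>l a'. \<beta> ^ n * u l a') q"
proof -
  have "\<beta> ^ Suc n \<le> 1" using assms(2,3) by (rule power_le_one)
  then have "\<beta> ^ Suc n * cost U l \<le> cost U l" for l by (simp add: cost_def)
  then have "\<beta> ^ Suc n * cost U l + \<beta> * (\<Sum>a'\<in>A. \<pi> l a' * (\<beta> ^ n * u l a')) \<le> backup \<beta> (\<lambda>l a'. \<beta> ^ n * u l a') l" for l
    by (simp add: backup_def)
  moreover have "\<beta> ^ Suc n * expected_backup 1 u q
      = (\<Sum>l\<in>X. q l * (\<beta> ^ Suc n * cost U l + \<beta> * (\<Sum>a'\<in>A. \<pi> l a' * (\<beta> ^ n * u l a'))))"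
    by (simp add: expected_backup_def backup_def sum_distrib_left algebra_simps)
  ultimately show ?thesis
    using assms(1) unfolding expected_backup_def by (auto simp: is_dist_def intro!: sum_mono mult_left_mono)
qed

lemma expected_backup_unit_interval:
  assumes u: "unit_valued u" and q: "is_dist X q" and \<beta>: "0 \<le> \<beta>" "\<beta> \<le> 1"
  shows "0 \<le> expected_backup \<beta> u q \<and> expected_backup \<beta> u q \<le> 1"
proof -
  have "0 \<le> backup \<beta> u l \<and> backup \<beta> u l \<le> 1" if l: "l \<in> X" for l
  proof (cases "l \<in> H")
    case True
    have "0 \<le> (\<Sum>a'\<in>A. \<pi> l a' * u l a')" "(\<Sum>a'\<in>A. \<pi> l a' * u l a') \<le> (\<Sum>a'\<in>A. \<pi> l a')"
      using u \<pi>_nonneg[OF l] by (auto simp: unit_valued_def intro!: sum_nonneg sum_mono mult_left_le)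
    then show ?thesis using True \<beta> \<pi>_sum[OF l] by (auto simp: backup_def cost_def intro: mult_le_one)
  next
    case False
    then show ?thesis using u by (simp add: backup_def unit_valued_def cost_def)
  qed
  moreover have q_nonneg: "0 \<le> q l" for l using q by (simp add: is_dist_def)
  ultimately have "0 \<le> expected_backup \<beta> u q" "expected_backup \<beta> u q \<le> (\<Sum>l\<in>X. q l)"
    unfolding expected_backup_def by (auto intro!: sum_nonneg sum_mono mult_left_le)
  then show ?thesis using q by (simp add: is_dist_def)
qed

lemma bellman_worst_case:
  assumes "y \<in> H" "a \<in> A"
  obtains p where "p \<in> wasserstein_ball X (P y a) \<delta>"
    "\<And>q. q \<in> wasserstein_ball X (P y a) \<delta> \<Longrightarrow> expected_backup \<beta> u q \<le> expected_backup \<beta> u p"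
    "bellman \<beta> u y a = expected_backup \<beta> u p"
    "bellman \<beta> u y a = (INF lam\<in>{0..}. dual_objective X (P y a) \<delta> (backup \<beta> u) lam)"
proof -
  obtain p where p: "p \<in> wasserstein_ball X (P y a) \<delta>"
    and max: "\<And>q. q \<in> wasserstein_ball X (P y a) \<delta> \<Longrightarrow> expected_backup \<beta> u q \<le> expected_backup \<beta> u p"
    and dual: "(INF lam\<in>{0..}. dual_objective X (P y a) \<delta> (backup \<beta> u) lam) = expected_backup \<beta> u p"
    using wasserstein_dro_duality[OF finite_X P_dist[OF assms] \<delta>_nonneg, of "backup \<beta> u"]
    unfolding expected_backup_def by blast
  have "bellman \<beta> u y a = expected_backup \<beta> u p"
    unfolding bellman_def using assms p max by (auto intro: cSup_eq_maximum)
  with p max dual show ?thesis by (intro that) auto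
qed

lemma expected_backup_le_bellman:
  "y \<in> H \<Longrightarrow> a \<in> A \<Longrightarrow> q \<in> wasserstein_ball X (P y a) \<delta> \<Longrightarrow> expected_backup \<beta> u q \<le> bellman \<beta> u y a"
  by (metis bellman_worst_case)

lemma bellman_mono:
  assumes "\<And>l a'. l \<in> X \<Longrightarrow> a' \<in> A \<Longrightarrow> u l a' \<le> v l a'" "a \<in> A" "0 \<le> \<beta>"
  shows "bellman \<beta> u y a \<le> bellman \<beta> v y a"
proof (cases "y \<in> H")
  case True
  obtain p where p: "p \<in> wasserstein_ball X (P y a) \<delta>" and u: "bellman \<beta> u y a = expected_backup \<beta> u p"
    using bellman_worst_case[OF True assms(2)] by metis
  have "expected_backup \<beta> u p \<le> expected_backup \<beta> v p"
    using p assms by (intro expected_backup_mono) (auto simp: wasserstein_ball_def)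
  also have "\<dots> \<le> bellman \<beta> v y a" by (rule expected_backup_le_bellman[OF True assms(2) p])
  finally show ?thesis using u by simp
next
  case False
  then show ?thesis by (simp add: bellman_outside)
qed

lemma value_iter_Suc: "value_iter \<beta> (Suc n) = bellman \<beta> (value_iter \<beta> n)"
  by (simp add: value_iter_def)

context
  fixes \<beta> :: real
  assumes \<beta>: "0 \<le> \<beta>" "\<beta> \<le> 1"
begin

lemma bellman_unit_valued:
  assumes "unit_valued u"
  shows "unit_valued (bellman \<beta> u)"
proof -
  have "0 \<le> bellman \<beta> u y a \<and> bellman \<beta> u y a \<le> 1" if y: "y \<in> H" and a: "a \<in> A" for y a
  proof -
    obtain p where "p \<in> wasserstein_ball X (P y a) \<delta>" "bellman \<beta> u y a = expected_backup \<beta> u p"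
      using bellman_worst_case[OF y a] by metis
    then show ?thesis using expected_backup_unit_interval[OF assms _ \<beta>] by (simp add: wasserstein_ball_def)
  qed
  then show ?thesis unfolding unit_valued_def by (auto simp: bellman_def)
qed

lemma value_iter_unit_valued: "unit_valued (value_iter \<beta> n)"
  by (induction n) (simp_all add: value_iter_Suc bellman_unit_valued, simp add: value_iter_def unit_valued_def)

lemma value_iter_incseq:
  assumes "a \<in> A"
  shows "incseq (\<lambda>n. value_iter \<beta> n y a)"
proof (rule incseq_SucI)
  show "value_iter \<beta> n y a \<le> value_iter \<beta> (Suc n) y a" for n
    using assms
  proof (induction n arbitrary: y a)
    case 0
    then show ?case using value_iter_unit_valued[of 1] by (simp add: value_iter_def unit_valued_def)
  next
    case (Suc n)
    then show ?case using \<beta> by (simp only: value_iter_Suc) (rule bellman_mono)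
  qed
qed

lemma value_iter_bdd_above: "a \<in> A \<Longrightarrow> bdd_above (range (\<lambda>n. value_iter \<beta> n y a))"
  using value_iter_unit_valued by (auto simp: unit_valued_def intro!: bdd_aboveI[of _ 1])

lemma value_iter_le_opt_value: "a \<in> A \<Longrightarrow> value_iter \<beta> n y a \<le> opt_value \<beta> y a"
  unfolding opt_value_def by (rule cSUP_upper[OF _ value_iter_bdd_above]) simp_all

lemma value_iter_tendsto: "a \<in> A \<Longrightarrow> (\<lambda>n. value_iter \<beta> n y a) \<longlonglongrightarrow> opt_value \<beta> y a"
  unfolding opt_value_def by (rule LIMSEQ_incseq_SUP[OF value_iter_bdd_above value_iter_incseq])

lemma opt_value_unit_valued: "unit_valued (opt_value \<beta>)"
proof -
  have "0 \<le> opt_value \<beta> y a \<and> opt_value \<beta> y a \<le> 1" if "a \<in> A" for y a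
    using value_iter_le_opt_value[OF that, of 0] value_iter_unit_valued that
    by (auto simp: value_iter_def unit_valued_def opt_value_def intro!: cSUP_least)
  then show ?thesis
    using value_iter_unit_valued by (simp add: unit_valued_def opt_value_def)
qed

lemma opt_value_fixpoint:
  assumes a: "a \<in> A"
  shows "opt_value \<beta> y a = bellman \<beta> (opt_value \<beta>) y a"
proof (cases "y \<in> H")
  case y: True
  show ?thesis
  proof (rule antisym)
    have "value_iter \<beta> n y a \<le> bellman \<beta> (opt_value \<beta>) y a" for n
    proof (cases n)
      case 0
      then show ?thesis
        using bellman_unit_valued[OF opt_value_unit_valued] a by (simp add: value_iter_def unit_valued_def)
    next
      case (Suc m)
      then show ?thesis
        using a \<beta> by (simp only: value_iter_Suc) (rule bellman_mono[OF value_iter_le_opt_value])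
    qed
    then show "opt_value \<beta> y a \<le> bellman \<beta> (opt_value \<beta>) y a"
      unfolding opt_value_def[of _ y] by (rule cSUP_least[OF UNIV_not_empty])
  next
    obtain p where p: "p \<in> wasserstein_ball X (P y a) \<delta>"
      and opt: "bellman \<beta> (opt_value \<beta>) y a = expected_backup \<beta> (opt_value \<beta>) p"
      using bellman_worst_case[OF y a] by metis
    have "(\<lambda>n. expected_backup \<beta> (value_iter \<beta> n) p) \<longlonglongrightarrow> expected_backup \<beta> (opt_value \<beta>) p"
      unfolding expected_backup_def backup_def by (intro tendsto_intros value_iter_tendsto)
    moreover have "expected_backup \<beta> (value_iter \<beta> n) p \<le> opt_value \<beta> y a" for n
      using order_trans[OF expected_backup_le_bellman[OF y a p]
          value_iter_le_opt_value[OF a, of "Suc n", unfolded value_iter_Suc]] .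
    ultimately show "bellman \<beta> (opt_value \<beta>) y a \<le> opt_value \<beta> y a"
      unfolding opt by (intro LIMSEQ_le_const2) auto
  qed
next
  case False
  then show ?thesis using opt_value_unit_valued by (simp add: bellman_outside unit_valued_def)
qed

lemma value_iter_discount:
  assumes "a \<in> A"
  shows "\<beta> ^ n * value_iter 1 n y a \<le> value_iter \<beta> n y a"
  using assms
proof (induction n arbitrary: y a)
  case 0
  then show ?case by (simp add: value_iter_def)
next
  case (Suc n)
  show ?case
  proof (cases "y \<in> H")
    case y: True
    obtain p where p: "p \<in> wasserstein_ball X (P y a) \<delta>"
      and backup_p: "value_iter 1 (Suc n) y a = expected_backup 1 (value_iter 1 n) p"
      using bellman_worst_case[OF y Suc.prems] unfolding value_iter_Suc by metis
    have p_dist: "is_dist X p" using p by (simp add: wasserstein_ball_def)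
    have "\<beta> ^ Suc n * expected_backup 1 (value_iter 1 n) p \<le> expected_backup \<beta> (\<lambda>l a'. \<beta> ^ n * value_iter 1 n l a') p"
      by (rule expected_backup_power_discount[OF p_dist \<beta>])
    also have "\<dots> \<le> expected_backup \<beta> (value_iter \<beta> n) p"
      using Suc.IH p_dist \<beta>(1) by (rule expected_backup_mono)
    also have "\<dots> \<le> value_iter \<beta> (Suc n) y a"
      unfolding value_iter_Suc by (rule expected_backup_le_bellman[OF y Suc.prems p])
    finally show ?thesis using backup_p by simp
  next
    case False
    then show ?thesis by (simp add: value_iter_Suc bellman_outside)
  qed
qed

end

lemma fin_cost_Suc_expected_backup:
  "fin_cost X E U A \<pi> Pt (Suc n) y a
    = (if y \<in> H then expected_backup 1 (fin_cost X E U A \<pi> Pt n) (Pt y a) else 0)"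
  by (simp add: expected_backup_def backup_def)

lemma fin_cost_outside: "y \<notin> H \<Longrightarrow> fin_cost X E U A \<pi> Pt n y a = 0"
  by (cases n) (simp_all del: Diff_iff)

lemma fin_cost_unit_valued:
  assumes "Pt \<in> kernels"
  shows "unit_valued (fin_cost X E U A \<pi> Pt n)"
proof (induction n)
  case 0
  then show ?case by (simp add: unit_valued_def)
next
  case (Suc n)
  then show ?case
    using assms expected_backup_unit_interval[OF Suc.IH, of _ 1]
    by (auto simp: unit_valued_def kernels_iff wasserstein_ball_def fin_cost_Suc_expected_backup
        simp del: fin_cost.simps)
qed

lemma fin_cost_le_value_iter:
  assumes "Pt \<in> kernels" "a \<in> A"
  shows "fin_cost X E U A \<pi> Pt n y a \<le> value_iter 1 n y a"
  using assms(2)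
proof (induction n arbitrary: y a)
  case 0
  then show ?case by (simp add: value_iter_def)
next
  case (Suc n)
  show ?case
  proof (cases "y \<in> H")
    case y: True
    then have Pt: "Pt y a \<in> wasserstein_ball X (P y a) \<delta>" using assms(1) Suc.prems by (simp add: kernels_iff)
    have "expected_backup 1 (fin_cost X E U A \<pi> Pt n) (Pt y a) \<le> expected_backup 1 (value_iter 1 n) (Pt y a)"
      using Suc.IH Pt by (intro expected_backup_mono) (auto simp: wasserstein_ball_def)
    also have "\<dots> \<le> value_iter 1 (Suc n) y a"
      unfolding value_iter_Suc by (rule expected_backup_le_bellman[OF y Suc.prems Pt])
    finally show ?thesis using y by (simp only: fin_cost_Suc_expected_backup if_True)
  next
    case False
    then show ?thesis by (simp add: fin_cost_outside value_iter_Suc bellman_outside del: fin_cost.simps)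
  qed
qed

lemma fin_cost_le_exp_cost:
  assumes "Pt \<in> kernels" "a \<in> A"
  shows "fin_cost X E U A \<pi> Pt n y a \<le> exp_cost X E U A \<pi> Pt y a"
  unfolding exp_cost_def using fin_cost_unit_valued[OF assms(1)] assms(2)
  by (intro cSUP_upper bdd_aboveI[of _ 1]) (auto simp: unit_valued_def)

lemma exp_cost_le_opt_value:
  assumes "Pt \<in> kernels" "a \<in> A"
  shows "exp_cost X E U A \<pi> Pt y a \<le> opt_value 1 y a"
  unfolding exp_cost_def
  using order_trans[OF fin_cost_le_value_iter[OF assms] value_iter_le_opt_value[OF _ _ assms(2)]]
  by (intro cSUP_least) auto

lemma greedy_kernel_exists:
  assumes \<beta>: "0 \<le> \<beta>" "\<beta> \<le> 1"
  obtains Pt where "Pt \<in> kernels"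
    "\<And>y a. y \<in> H \<Longrightarrow> a \<in> A \<Longrightarrow> opt_value \<beta> y a = expected_backup \<beta> (opt_value \<beta>) (Pt y a)"
proof
  define V where "V = opt_value \<beta>"
  define Pt where "Pt y a = (SOME p. p \<in> wasserstein_ball X (P y a) \<delta> \<and> V y a = expected_backup \<beta> V p)" for y a
  have Pt: "Pt y a \<in> wasserstein_ball X (P y a) \<delta> \<and> V y a = expected_backup \<beta> V (Pt y a)"
    if y: "y \<in> H" and a: "a \<in> A" for y a
  proof -
    obtain p where "p \<in> wasserstein_ball X (P y a) \<delta>" "bellman \<beta> V y a = expected_backup \<beta> V p"
      using bellman_worst_case[OF y a] by metis
    then have "\<exists>p. p \<in> wasserstein_ball X (P y a) \<delta> \<and> V y a = expected_backup \<beta> V p"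
      using opt_value_fixpoint[OF \<beta> a, of y] unfolding V_def by auto
    then show ?thesis unfolding Pt_def by (rule someI_ex)
  qed
  then show "Pt \<in> kernels" by (simp add: kernels_iff)
  show "opt_value \<beta> y a = expected_backup \<beta> (opt_value \<beta>) (Pt y a)" if "y \<in> H" "a \<in> A" for y a
    using Pt[OF that] by (simp add: V_def)
qed

lemma greedy_kernel_value_bound:
  assumes \<beta>: "0 \<le> \<beta>" "\<beta> \<le> 1" and kernel: "Pt \<in> kernels"
    and greedy: "\<And>y a. y \<in> H \<Longrightarrow> a \<in> A \<Longrightarrow> opt_value \<beta> y a = expected_backup \<beta> (opt_value \<beta>) (Pt y a)"
    and a: "a \<in> A"
  shows "opt_value \<beta> y a \<le> fin_cost X E U A \<pi> Pt n y a + \<beta> ^ n"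
  using a
proof (induction n arbitrary: y a)
  case 0
  then show ?case using opt_value_unit_valued[OF \<beta>] by (simp add: unit_valued_def)
next
  case (Suc n)
  show ?case
  proof (cases "y \<in> H")
    case y: True
    have dist: "is_dist X (Pt y a)" using kernel y Suc.prems by (simp add: kernels_iff wasserstein_ball_def)
    have "opt_value \<beta> y a = expected_backup \<beta> (opt_value \<beta>) (Pt y a)" by (rule greedy[OF y Suc.prems])
    also have "\<dots> \<le> expected_backup \<beta> (\<lambda>l a'. fin_cost X E U A \<pi> Pt n l a' + \<beta> ^ n) (Pt y a)"
      using Suc.IH dist \<beta> by (intro expected_backup_mono) auto
    also have "\<dots> = expected_backup \<beta> (fin_cost X E U A \<pi> Pt n) (Pt y a) + \<beta> ^ Suc n"
      by (simp add: expected_backup_add_const[OF dist])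
    also have "\<dots> \<le> fin_cost X E U A \<pi> Pt (Suc n) y a + \<beta> ^ Suc n"
      using expected_backup_le_undiscounted[OF fin_cost_unit_valued[OF kernel] dist] \<beta> y
      by (simp add: fin_cost_Suc_expected_backup del: fin_cost.simps)
    finally show ?thesis .
  next
    case False
    then show ?thesis
      using opt_value_unit_valued[OF \<beta>] \<beta> by (simp add: unit_valued_def fin_cost_outside del: fin_cost.simps)
  qed
qed

lemma discounted_opt_value_le_exp_cost:
  assumes \<beta>: "0 \<le> \<beta>" "\<beta> < 1"
  obtains Pt where "Pt \<in> kernels" "\<And>y a. a \<in> A \<Longrightarrow> opt_value \<beta> y a \<le> exp_cost X E U A \<pi> Pt y a"
proof -
  obtain Pt where kernel: "Pt \<in> kernels"
    and greedy: "\<And>y a. y \<in> H \<Longrightarrow> a \<in> A \<Longrightarrow> opt_value \<beta> y a = expected_backup \<beta> (opt_value \<beta>) (Pt y a)"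
    using greedy_kernel_exists[of \<beta>] \<beta> by auto
  have "opt_value \<beta> y a \<le> exp_cost X E U A \<pi> Pt y a" if a: "a \<in> A" for y a
  proof (rule tendsto_lowerbound)
    have "(\<lambda>n. \<beta> ^ n) \<longlonglongrightarrow> 0" using \<beta> by (intro LIMSEQ_power_zero) simp
    from tendsto_add[OF tendsto_const this]
    show "(\<lambda>n. exp_cost X E U A \<pi> Pt y a + \<beta> ^ n) \<longlonglongrightarrow> exp_cost X E U A \<pi> Pt y a" by simp
    have "opt_value \<beta> y a \<le> exp_cost X E U A \<pi> Pt y a + \<beta> ^ n" for n
      using greedy_kernel_value_bound[OF _ _ kernel greedy a, where n=n and y=y] fin_cost_le_exp_cost[OF kernel a, of n y] \<beta>
      by fastforce
    then show "\<forall>\<^sub>F n in sequentially. opt_value \<beta> y a \<le> exp_cost X E U A \<pi> Pt y a + \<beta> ^ n"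
      by simp
  qed simp
  with kernel show ?thesis by (rule that)
qed

lemma opt_value_le_robust_Q:
  assumes a: "a \<in> A"
  shows "opt_value 1 y a \<le> robust_Q X E U A \<pi> P \<delta> y a"
proof -
  have bdd: "bdd_above ((\<lambda>Pt. exp_cost X E U A \<pi> Pt y a) ` kernels)"
    using exp_cost_le_opt_value[OF _ a] by (intro bdd_aboveI2)
  have "value_iter 1 n y a \<le> robust_Q X E U A \<pi> P \<delta> y a" for n
  proof (rule power_mult_le_imp_le)
    fix \<beta> :: real assume \<beta>: "0 \<le> \<beta>" "\<beta> < 1"
    obtain Pt where Pt: "Pt \<in> kernels"
      and le: "\<And>y a. a \<in> A \<Longrightarrow> opt_value \<beta> y a \<le> exp_cost X E U A \<pi> Pt y a"
      using discounted_opt_value_le_exp_cost[OF \<beta>] by blast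
    have "\<beta> ^ n * value_iter 1 n y a \<le> value_iter \<beta> n y a"
      using \<beta> a by (intro value_iter_discount) auto
    also have "\<dots> \<le> opt_value \<beta> y a"
      using \<beta> a by (intro value_iter_le_opt_value) auto
    also have "\<dots> \<le> exp_cost X E U A \<pi> Pt y a" by (rule le[OF a])
    also have "\<dots> \<le> robust_Q X E U A \<pi> P \<delta> y a"
      unfolding robust_Q_def by (rule cSUP_upper[OF Pt bdd])
    finally show "\<beta> ^ n * value_iter 1 n y a \<le> robust_Q X E U A \<pi> P \<delta> y a" .
  qed
  then show ?thesis unfolding opt_value_def by (intro cSUP_least) auto
qed

lemma robust_Q_eq_opt_value:
  assumes a: "a \<in> A"
  shows "robust_Q X E U A \<pi> P \<delta> y a = opt_value 1 y a"
proof (rule antisym)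
  have "kernels \<noteq> {}" using greedy_kernel_exists[of 1] by auto
  then show "robust_Q X E U A \<pi> P \<delta> y a \<le> opt_value 1 y a"
    unfolding robust_Q_def using exp_cost_le_opt_value[OF _ a] by (intro cSUP_least)
qed (rule opt_value_le_robust_Q[OF a])

lemma robust_Q_dual_bellman:
  assumes x: "x \<in> H" and a: "a \<in> A"
  shows "robust_Q X E U A \<pi> P \<delta> x a =
    (INF lam\<in>{0..}. lam * \<delta> + (\<Sum>y\<in>X. (MAX l\<in>X. - lam * \<bar>l - y\<bar> + cost U l
        + (\<Sum>a'\<in>A. robust_Q X E U A \<pi> P \<delta> l a' * \<pi> l a')) * P x a y))"
proof -
  have backup: "backup 1 (opt_value 1) l = cost U l + (\<Sum>a'\<in>A. robust_Q X E U A \<pi> P \<delta> l a' * \<pi> l a')" for l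
    unfolding backup_def by (auto simp: robust_Q_eq_opt_value mult.commute intro!: sum.cong)
  have "robust_Q X E U A \<pi> P \<delta> x a = bellman 1 (opt_value 1) x a"
    using robust_Q_eq_opt_value[OF a] opt_value_fixpoint[of 1 a x] a by simp
  also have "\<dots> = (INF lam\<in>{0..}. dual_objective X (P x a) \<delta> (backup 1 (opt_value 1)) lam)"
    using bellman_worst_case[OF x a] by metis
  finally show ?thesis by (simp only: dual_objective_def c_transform_def backup add.assoc)
qed

end

theorem mainTheorem4:
  fixes X E U :: "real set" and A :: "'a set"
    and P :: "real \<Rightarrow> 'a \<Rightarrow> real \<Rightarrow> real" and \<pi> :: "real \<Rightarrow> 'a \<Rightarrow> real"
    and \<delta> :: real and x :: real and a :: 'a
  assumes "finite X" and "finite A" and "A \<noteq> {}"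
    and "E \<subseteq> X" and "U \<subseteq> X" and "E \<inter> U = {}"
    and "\<delta> \<ge> 0"
    and "\<And>x a. x \<in> X - (E \<union> U) \<Longrightarrow> a \<in> A \<Longrightarrow> is_dist X (P x a)"
    and "\<And>x. x \<in> X \<Longrightarrow> is_dist A (\<pi> x)"
    and "x \<in> X - (E \<union> U)" and "a \<in> A"
  shows "robust_Q X E U A \<pi> P \<delta> x a =
    (INF lam\<in>{0..}. lam * \<delta> + (\<Sum>y\<in>X. (MAX l\<in>X. - lam * \<bar>l - y\<bar> + cost U l
        + (\<Sum>a'\<in>A. robust_Q X E U A \<pi> P \<delta> l a' * \<pi> l a')) * P x a y))"
proof -
  interpret finite_robust_mdp X E U A P \<pi> \<delta>
    using assms by unfold_locales auto
  show ?thesis using assms by (intro robust_Q_dual_bellman) auto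
qed

end
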